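(* Let $m_x,m_y$ be positive integers, $\Delta\xi,\Delta\eta>0$, and let $\vec X:\mathbb R^2\to\mathbb R^2$ be a smooth map with nowhere vanishing Jacobian determinant such that $\vec X(\xi+m_x\Delta\xi,\eta)-\vec X(\xi,\eta)$ and $\vec X(\xi,\eta+m_y\Delta\eta)-\vec X(\xi,\eta)$ are constant vectors. Index pressure points by $(i,j)\in\mathbb Z_{m_x}\times\mathbb Z_{m_y}$ (indices taken modulo $m_x$, $m_y$), with weights ${\tt dVc}_{i,j}=\Delta\xi\Delta\eta\,|\det D\vec X(i\Delta\xi,j\Delta\eta)|$. Suppose that at every east face $(i,j)$, with computational location $\vec\xi^e_{i,j}=((i+\tfrac12)\Delta\xi,j\Delta\eta)$, a vector $\vec u^e_{i,j}\in\mathbb R^2$ is given, and at every north face $(i,j)$, with location $\vec\xi^n_{i,j}=(i\Delta\xi,(j+\tfrac12)\Delta\eta)$, a vector $\vec u^n_{i,j}\in\mathbb R^2$ is given. For $\varepsilon\in\{\tfrac12,\tfrac32,\dots\}$ define $$\overline{F}^e_{i,j}(\varepsilon)=-\frac{1}{\varepsilon}\Big(\vec X\big(\vec\xi^e_{i,j}+\varepsilon(0,\Delta\eta)\big)-\vec X\big(\vec\xi^e_{i,j}-\varepsilon(0,\Delta\eta)\big)\Big)^\perp\cdot\vec u^e_{i,j},$$ $$\overline{F}^n_{i,j}(\varepsilon)=\frac{1}{\varepsilon}\Big(\vec X\big(\vec\xi^n_{i,j}+\varepsilon(\Delta\xi,0)\big)-\vec X\big(\vec\xi^n_{i,j}-\varepsilon(\Delta\xi,0)\big)\Big)^\perp\cdot\vec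 u^n_{i,j},$$ where $(a,b)^\perp=(-b,a)$, and for a positive integer $K$ and real coefficients $\alpha(\tfrac12),\dots,\alpha(K-\tfrac12)$ define $$({\sf DIV})_{i,j}=\frac{1}{2\,{\tt dVc}_{i,j}}\sum_{\varepsilon\in\{1/2,\dots,K-1/2\}}\alpha(\varepsilon)\Big(\overline F^e_{i+\varepsilon-1/2,\,j}(\varepsilon)-\overline F^e_{i-\varepsilon-1/2,\,j}(\varepsilon)+\overline F^n_{i,\,j+\varepsilon-1/2}(\varepsilon)-\overline F^n_{i,\,j-\varepsilon-1/2}(\varepsilon)\Big).$$ Then (a) $\sum_{i,j}{\tt dVc}_{i,j}({\sf DIV})_{i,j}=0$ for all choices of the face vectors; and (b) if there is a constant $\vec c\in\mathbb R^2$ with $\vec u^e_{i,j}=\vec u^n_{i,j}=\vec c$ for all $(i,j)$, then $({\sf DIV})_{i,j}=0$ for all $(i,j)$.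
   Context: This is the finite-difference discrete divergence on a periodic, structured, curvilinear staggered 2D grid: the face vectors $\vec u^e,\vec u^n$ are the full velocity vectors reconstructed at the faces from staggered grid-aligned velocity components by interpolations that are exact for constant vector fields, so that for the discrete representation of a constant vector field $\vec c$ they all equal $\vec c$. Property (a) is the discrete statement that the integral of a divergence vanishes; property (b) is the statement that the discrete divergence of a constant vector field vanishes. *)

theory Defs
  imports "HOL-Analysis.Analysis"
begin

definition pt :: "real \<Rightarrow> real \<Rightarrow> real^2" where
  "pt a b = vector [a, b]"

definition perp :: "real^2 \<Rightarrow> real^2" where
  "perp v = vector [- (v$2), v$1]"

fun Ck :: "nat \<Rightarrow> (real^2 \<Rightarrow> real) \<Rightarrow> bool" where
  "Ck 0 f = continuous_on UNIV f"
| "Ck (Suc k) f = (continuous_on UNIV f \<and>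
     (\<forall>d::2. \<exists>g. (\<forall>x. ((\<lambda>t. f (x + t *\<^sub>R axis d 1)) has_real_derivative g x) (at 0))
                 \<and> Ck k g))"

definition smooth_map :: "(real^2 \<Rightarrow> real^2) \<Rightarrow> bool" where
  "smooth_map X = (\<forall>k. \<forall>c::2. Ck k (\<lambda>x. X x $ c))"

definition jac_det :: "(real^2 \<Rightarrow> real^2) \<Rightarrow> real^2 \<Rightarrow> real" where
  "jac_det X x = det (matrix (frechet_derivative X (at x)))"

definition dVc :: "(real^2 \<Rightarrow> real^2) \<Rightarrow> real \<Rightarrow> real \<Rightarrow> int \<Rightarrow> int \<Rightarrow> int \<Rightarrow> int \<Rightarrow> real" where
  "dVc X dxi deta mx my i j =
     dxi * deta * \<bar>jac_det X (pt (of_int (i mod mx) * dxi) (of_int (j mod my) * deta))\<bar>"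

definition Fe :: "(real^2 \<Rightarrow> real^2) \<Rightarrow> real \<Rightarrow> real \<Rightarrow> int \<Rightarrow> int \<Rightarrow> (int \<Rightarrow> int \<Rightarrow> real^2)
                  \<Rightarrow> real \<Rightarrow> int \<Rightarrow> int \<Rightarrow> real" where
  "Fe X dxi deta mx my ue eps i j =
     (let i' = i mod mx; j' = j mod my;
          loc = pt ((of_int i' + 1/2) * dxi) (of_int j' * deta)
      in - (1 / eps) * (perp (X (loc + pt 0 (eps * deta)) - X (loc - pt 0 (eps * deta))) \<bullet> ue i' j'))"

definition Fn :: "(real^2 \<Rightarrow> real^2) \<Rightarrow> real \<Rightarrow> real \<Rightarrow> int \<Rightarrow> int \<Rightarrow> (int \<Rightarrow> int \<Rightarrow> real^2)
                  \<Rightarrow> real \<Rightarrow> int \<Rightarrow> int \<Rightarrow> real" where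
  "Fn X dxi deta mx my un eps i j =
     (let i' = i mod mx; j' = j mod my;
          loc = pt (of_int i' * dxi) ((of_int j' + 1/2) * deta)
      in (1 / eps) * (perp (X (loc + pt (eps * dxi) 0) - X (loc - pt (eps * dxi) 0)) \<bullet> un i' j'))"

text \<open>Discrete divergence. eps ranges over k + 1/2 for k < K; alpha k stands for alpha(k+1/2).
  Then i + eps - 1/2 = i + k and i - eps - 1/2 = i - k - 1.\<close>
definition DIV :: "(real^2 \<Rightarrow> real^2) \<Rightarrow> real \<Rightarrow> real \<Rightarrow> int \<Rightarrow> int \<Rightarrow> nat \<Rightarrow> (nat \<Rightarrow> real)
                  \<Rightarrow> (int \<Rightarrow> int \<Rightarrow> real^2) \<Rightarrow> (int \<Rightarrow> int \<Rightarrow> real^2) \<Rightarrow> int \<Rightarrow> int \<Rightarrow> real" where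
  "DIV X dxi deta mx my K alpha ue un i j =
     1 / (2 * dVc X dxi deta mx my i j) *
     (\<Sum>k<K. let eps = real k + 1/2 in alpha k *
        ( Fe X dxi deta mx my ue eps (i + int k) j - Fe X dxi deta mx my ue eps (i - int k - 1) j
        + Fn X dxi deta mx my un eps i (j + int k) - Fn X dxi deta mx my un eps i (j - int k - 1)))"

end

theory Submission
  imports Defs
begin

text \<open>(a) is summation by parts: dVc cancels the factor 1/dVc of DIV (the Jacobian hypothesis
  keeps it nonzero), leaving for each stencil width a sum over one period of differences of
  translates of periodic face fluxes.
  (b) is a discrete Stokes theorem: for a constant field the four fluxes of width k + 1/2 around a
  pressure point are the sides of a rectangle, and the values of X at its corners cancel pairwise.
  Reducing indices modulo the period is harmless because a period shift changes X by a constant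
  and the fluxes only see differences of X.\<close>

lemma pt_add [simp]: "pt a b + pt c d = pt (a + c) (b + d)"
  by (simp add: pt_def vec_eq_iff forall_2 vector_def)

lemma pt_diff [simp]: "pt a b - pt c d = pt (a - c) (b - d)"
  by (simp add: pt_def vec_eq_iff forall_2 vector_def)

lemma perp_diff: "perp (a - b) = perp a - perp b"
  by (simp add: perp_def vec_eq_iff forall_2 vector_def)

lemma of_int_mod_eq: "of_int (i mod m) = of_int i + of_int (- (i div m)) * of_int m"
  by (simp add: minus_div_mult_eq_mod[symmetric])

lemma quasi_periodic_shift:
  fixes f :: "real \<Rightarrow> 'a::real_vector"
  assumes "\<And>a. f (a + p) - f a = c"
  shows "f (a + of_int n * p) = f a + of_int n *\<^sub>R c"
proof (induction n rule: int_induct[where k = 0])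
  case base
  then show ?case by simp
next
  case (step1 i)
  have "f (a + of_int (i + 1) * p) = f ((a + of_int i * p) + p)"
    by (simp add: algebra_simps)
  also have "\<dots> = f (a + of_int i * p) + c"
    using assms[of "a + of_int i * p"] by (simp add: algebra_simps)
  finally show ?case
    using step1 by (simp add: algebra_simps)
next
  case (step2 i)
  have "f (a + of_int i * p) = f ((a + of_int (i - 1) * p) + p)"
    by (simp add: algebra_simps)
  also have "\<dots> = f (a + of_int (i - 1) * p) + c"
    using assms[of "a + of_int (i - 1) * p"] by (simp add: algebra_simps)
  finally show ?case
    using step2 by (simp add: algebra_simps)
qed

lemma quasi_periodic_pt_shift:
  fixes X :: "real^2 \<Rightarrow> 'a::real_vector"
  assumes "\<And>a b. X (pt (a + P) b) - X (pt a b) = c1"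
    and "\<And>a b. X (pt a (b + Q)) - X (pt a b) = c2"
  shows "X (pt (a + of_int n * P) (b + of_int m * Q)) = X (pt a b) + of_int n *\<^sub>R c1 + of_int m *\<^sub>R c2"
proof -
  have "X (pt (a + of_int n * P) (b + of_int m * Q)) = X (pt (a + of_int n * P) b) + of_int m *\<^sub>R c2"
    using quasi_periodic_shift[of "\<lambda>t. X (pt (a + of_int n * P) t)"] assms(2) by blast
  moreover have "X (pt (a + of_int n * P) b) = X (pt a b) + of_int n *\<^sub>R c1"
    using quasi_periodic_shift[of "\<lambda>t. X (pt t b)"] assms(1) by blast
  ultimately show ?thesis
    by simp
qed

lemma quasi_periodic_pt_diff:
  fixes X :: "real^2 \<Rightarrow> 'a::real_vector"
  assumes "\<And>a b. X (pt (a + P) b) - X (pt a b) = c1"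
    and "\<And>a b. X (pt a (b + Q)) - X (pt a b) = c2"
  shows "X (pt (a + of_int n * P) (b + of_int m * Q)) - X (pt (a' + of_int n * P) (b' + of_int m * Q))
       = X (pt a b) - X (pt a' b')"
  by (simp add: quasi_periodic_pt_shift[OF assms])

lemma Fe_mod [simp]: "Fe X dxi deta mx my ue eps (i mod mx) j = Fe X dxi deta mx my ue eps i j"
  by (simp add: Fe_def)

lemma Fn_mod [simp]: "Fn X dxi deta mx my un eps i (j mod my) = Fn X dxi deta mx my un eps i j"
  by (simp add: Fn_def)

lemma Fe_constant_field:
  assumes "\<And>a b. X (pt (a + of_int mx * dxi) b) - X (pt a b) = c1"
    and "\<And>a b. X (pt a (b + of_int my * deta)) - X (pt a b) = c2"
    and "ue (i mod mx) (j mod my) = c"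
  shows "Fe X dxi deta mx my ue eps i j =
     - (1 / eps) * (perp (X (pt ((of_int i + 1/2) * dxi) (of_int j * deta + eps * deta))
                        - X (pt ((of_int i + 1/2) * dxi) (of_int j * deta - eps * deta))) \<bullet> c)"
proof -
  let ?n = "- (i div mx)" and ?m = "- (j div my)"
  have x: "(of_int (i mod mx) + 1/2) * dxi = (of_int i + 1/2) * dxi + of_int ?n * (of_int mx * dxi)"
    by (simp add: of_int_mod_eq[of i mx] algebra_simps)
  have y: "of_int (j mod my) * deta + eps * deta
           = (of_int j * deta + eps * deta) + of_int ?m * (of_int my * deta)"
         "of_int (j mod my) * deta - eps * deta
           = (of_int j * deta - eps * deta) + of_int ?m * (of_int my * deta)"
    by (simp_all add: of_int_mod_eq[of j my] algebra_simps)
  show ?thesis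
    unfolding Fe_def Let_def pt_add pt_diff add_0_right diff_0_right x y
      quasi_periodic_pt_diff[OF assms(1,2)] assms(3) ..
qed

lemma Fn_constant_field:
  assumes "\<And>a b. X (pt (a + of_int mx * dxi) b) - X (pt a b) = c1"
    and "\<And>a b. X (pt a (b + of_int my * deta)) - X (pt a b) = c2"
    and "un (i mod mx) (j mod my) = c"
  shows "Fn X dxi deta mx my un eps i j =
     (1 / eps) * (perp (X (pt (of_int i * dxi + eps * dxi) ((of_int j + 1/2) * deta))
                      - X (pt (of_int i * dxi - eps * dxi) ((of_int j + 1/2) * deta))) \<bullet> c)"
proof -
  let ?n = "- (i div mx)" and ?m = "- (j div my)"
  have x: "of_int (i mod mx) * dxi + eps * dxi
           = (of_int i * dxi + eps * dxi) + of_int ?n * (of_int mx * dxi)"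
         "of_int (i mod mx) * dxi - eps * dxi
           = (of_int i * dxi - eps * dxi) + of_int ?n * (of_int mx * dxi)"
    by (simp_all add: of_int_mod_eq[of i mx] algebra_simps)
  have y: "(of_int (j mod my) + 1/2) * deta = (of_int j + 1/2) * deta + of_int ?m * (of_int my * deta)"
    by (simp add: of_int_mod_eq[of j my] algebra_simps)
  show ?thesis
    unfolding Fn_def Let_def pt_add pt_diff add_0_right diff_0_right x y
      quasi_periodic_pt_diff[OF assms(1,2)] assms(3) ..
qed

lemma periodic_sum_shift:
  fixes f :: "int \<Rightarrow> 'a::comm_monoid_add"
  assumes "m > 0" and "\<And>i. f (i mod m) = f i"
  shows "(\<Sum>i\<in>{0..<m}. f (i + a)) = (\<Sum>i\<in>{0..<m}. f i)"
proof -
  have "bij_betw (\<lambda>i. (i + a) mod m) {0..<m} {0..<m}"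
    by (rule bij_betw_byWitness[where f' = "\<lambda>i. (i - a) mod m"])
      (use assms(1) in \<open>auto simp: mod_add_left_eq mod_diff_left_eq\<close>)
  then have "(\<Sum>i\<in>{0..<m}. f ((i + a) mod m)) = (\<Sum>i\<in>{0..<m}. f i)"
    by (rule sum.reindex_bij_betw)
  then show ?thesis
    by (simp add: assms(2))
qed

lemma periodic_sum_diff_shifts:
  fixes f :: "int \<Rightarrow> 'a::ab_group_add"
  assumes "m > 0" and "\<And>i. f (i mod m) = f i"
  shows "(\<Sum>i\<in>{0..<m}. f (i + a) - f (i + b)) = 0"
  by (simp add: sum_subtractf periodic_sum_shift[of m f, OF assms])

lemma dVc_nonzero:
  assumes "dxi \<noteq> 0" and "deta \<noteq> 0" and "\<And>x. jac_det X x \<noteq> 0"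
  shows "dVc X dxi deta mx my i j \<noteq> 0"
  using assms by (simp add: dVc_def)

lemma DIV_total_flux_zero:
  assumes "mx > 0" and "my > 0" and "dxi \<noteq> 0" and "deta \<noteq> 0" and "\<And>x. jac_det X x \<noteq> 0"
  shows "(\<Sum>i\<in>{0..<mx}. \<Sum>j\<in>{0..<my}.
            dVc X dxi deta mx my i j * DIV X dxi deta mx my K alpha ue un i j) = 0"
proof -
  define E where "E k = Fe X dxi deta mx my ue (real k + 1/2)" for k
  define N where "N k = Fn X dxi deta mx my un (real k + 1/2)" for k
  define S where "S i j k = E k (i + int k) j - E k (i - int k - 1) j
                          + (N k i (j + int k) - N k i (j - int k - 1))" for i j k
  have weighted: "dVc X dxi deta mx my i j * DIV X dxi deta mx my K alpha ue un i j
                  = (\<Sum>k<K. alpha k * S i j k) / 2" for i j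
    using dVc_nonzero[OF assms(3-5)]
    by (simp add: DIV_def E_def N_def S_def Let_def algebra_simps)
  have E_balance: "(\<Sum>i\<in>{0..<mx}. E k (i + int k) j - E k (i - int k - 1) j) = 0" for k j
    using periodic_sum_diff_shifts[OF assms(1), of "\<lambda>i. E k i j" "int k" "- int k - 1"]
    by (simp add: E_def algebra_simps)
  have N_balance: "(\<Sum>j\<in>{0..<my}. N k i (j + int k) - N k i (j - int k - 1)) = 0" for k i
    using periodic_sum_diff_shifts[OF assms(2), of "\<lambda>j. N k i j" "int k" "- int k - 1"]
    by (simp add: N_def algebra_simps)
  have balance: "(\<Sum>i\<in>{0..<mx}. \<Sum>j\<in>{0..<my}. S i j k) = 0" for k
  proof -
    have "(\<Sum>i\<in>{0..<mx}. \<Sum>j\<in>{0..<my}. S i j k)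
        = (\<Sum>j\<in>{0..<my}. \<Sum>i\<in>{0..<mx}. E k (i + int k) j - E k (i - int k - 1) j)
          + (\<Sum>i\<in>{0..<mx}. \<Sum>j\<in>{0..<my}. N k i (j + int k) - N k i (j - int k - 1))"
      unfolding S_def sum.distrib by (subst sum.swap) (rule refl)
    then show ?thesis
      by (simp add: E_balance N_balance)
  qed
  have "(\<Sum>i\<in>{0..<mx}. \<Sum>j\<in>{0..<my}.
            dVc X dxi deta mx my i j * DIV X dxi deta mx my K alpha ue un i j)
        = (\<Sum>i\<in>{0..<mx}. \<Sum>j\<in>{0..<my}. \<Sum>k<K. alpha k * S i j k) / 2"
    by (simp add: weighted sum_divide_distrib)
  also have "\<dots> = (\<Sum>k<K. alpha k * (\<Sum>i\<in>{0..<mx}. \<Sum>j\<in>{0..<my}. S i j k)) / 2"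
    by (simp add: sum_distrib_left sum.swap[of _ "{..<K}"])
  finally show ?thesis
    by (simp add: balance)
qed

lemma DIV_constant_field_zero:
  assumes "\<And>a b. X (pt (a + of_int mx * dxi) b) - X (pt a b) = c1"
    and "\<And>a b. X (pt a (b + of_int my * deta)) - X (pt a b) = c2"
    and "\<And>i j. ue (i mod mx) (j mod my) = c" and "\<And>i j. un (i mod mx) (j mod my) = c"
  shows "DIV X dxi deta mx my K alpha ue un i j = 0"
proof -
  have circulation:
    "Fe X dxi deta mx my ue (real k + 1/2) (i + int k) j
     - Fe X dxi deta mx my ue (real k + 1/2) (i - int k - 1) j
     + Fn X dxi deta mx my un (real k + 1/2) i (j + int k)
     - Fn X dxi deta mx my un (real k + 1/2) i (j - int k - 1) = 0" for k
  proof -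
    define e where "e = real k + 1/2"
    define xp xm yp ym where "xp = (of_int i + e) * dxi" and "xm = (of_int i - e) * dxi"
      and "yp = (of_int j + e) * deta" and "ym = (of_int j - e) * deta"
    have "e \<noteq> 0"
      unfolding e_def by linarith
    have sides:
      "Fe X dxi deta mx my ue e (i + int k) j = - (1/e) * (perp (X (pt xp yp) - X (pt xp ym)) \<bullet> c)"
      "Fe X dxi deta mx my ue e (i - int k - 1) j = - (1/e) * (perp (X (pt xm yp) - X (pt xm ym)) \<bullet> c)"
      "Fn X dxi deta mx my un e i (j + int k) = (1/e) * (perp (X (pt xp yp) - X (pt xm yp)) \<bullet> c)"
      "Fn X dxi deta mx my un e i (j - int k - 1) = (1/e) * (perp (X (pt xp ym) - X (pt xm ym)) \<bullet> c)"
      by (simp_all add: Fe_constant_field[where ue = ue, OF assms(1,2,3)]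
          Fn_constant_field[where un = un, OF assms(1,2,4)]
          xp_def xm_def yp_def ym_def e_def algebra_simps)
    show ?thesis
      unfolding e_def[symmetric] sides
      using \<open>e \<noteq> 0\<close> by (simp add: perp_diff inner_diff_left field_simps)
  qed
  show ?thesis
    by (simp add: DIV_def Let_def circulation)
qed

theorem mainTheorem2:
  fixes X :: "real^2 \<Rightarrow> real^2" and mx my :: int and dxi deta :: real
    and K :: nat and alpha :: "nat \<Rightarrow> real"
    and ue un :: "int \<Rightarrow> int \<Rightarrow> real^2"
  assumes "mx > 0" and "my > 0" and "dxi > 0" and "deta > 0"
    and "smooth_map X"
    and "\<forall>x. jac_det X x \<noteq> 0"
    and "\<exists>c. \<forall>a b. X (pt (a + of_int mx * dxi) b) - X (pt a b) = c"
    and "\<exists>c. \<forall>a b. X (pt a (b + of_int my * deta)) - X (pt a b) = c"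
    and "K > 0"
  shows "(\<Sum>i\<in>{0..<mx}. \<Sum>j\<in>{0..<my}.
            dVc X dxi deta mx my i j * DIV X dxi deta mx my K alpha ue un i j) = 0
         \<and> (\<forall>c. (\<forall>i\<in>{0..<mx}. \<forall>j\<in>{0..<my}. ue i j = c \<and> un i j = c)
            \<longrightarrow> (\<forall>i j. DIV X dxi deta mx my K alpha ue un i j = 0))"
proof (intro conjI allI impI)
  show "(\<Sum>i\<in>{0..<mx}. \<Sum>j\<in>{0..<my}.
            dVc X dxi deta mx my i j * DIV X dxi deta mx my K alpha ue un i j) = 0"
    using DIV_total_flux_zero assms(1-4,6) by simp
next
  fix c i j
  assume "\<forall>i\<in>{0..<mx}. \<forall>j\<in>{0..<my}. ue i j = c \<and> un i j = c"
  then have "ue (a mod mx) (b mod my) = c" "un (a mod mx) (b mod my) = c" for a b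
    using assms(1,2) by simp_all
  moreover obtain c1 c2
    where "\<forall>a b. X (pt (a + of_int mx * dxi) b) - X (pt a b) = c1"
      and "\<forall>a b. X (pt a (b + of_int my * deta)) - X (pt a b) = c2"
    using assms(7,8) by blast
  ultimately show "DIV X dxi deta mx my K alpha ue un i j = 0"
    by (intro DIV_constant_field_zero[where ue = ue and un = un and c = c]) simp_all
qed

end
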